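(* Assume the setting and hypotheses of the context (continuity of the regularization at $P$ w.r.t. $d$, $d(P_n,P)=o_P(r_n^{-1})$ with $(r_n)$ positive diverging, and the majorants $\bar B,\bar\delta$, grids $\mathcal{G}_n$ and choice $\tilde k_n$ defined there). Suppose moreover that $k\mapsto\bar\delta_k(t)$ and $k\mapsto\bar B_k(P)$ are continuous, that the sets $$\mathcal{G}_n^+=\{k\in\mathcal{G}_n:\bar\delta_k(r_n^{-1})\ge\bar B_k(P)\},\qquad\mathcal{G}_n^-=\{k\in\mathcal{G}_n:\bar\delta_k(r_n^{-1})\le\bar B_k(P)\}$$ are non-empty, and that $$\frac{\min_{k\in\mathcal{G}_n^+}\bar\delta_k(r_n^{-1})}{\max_{k\in\mathcal{G}_n^-}\bar\delta_k(r_n^{-1})}=O(1).$$ Then $$\|\psi_{\tilde k_n}(P_n)-\psi(P)\|_\Theta=O_P\left(\inf_{k\in\mathbb{R}_+}\{\bar\delta_k(r_n^{-1})+\bar B_k(P)\}\right).$$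
   Context: Setting: $\mathbb{Z}\subseteq\mathbb{R}^d$; data IID with law $P\in\mathcal{M}$; $\mathbf{P}$ the product probability on $\mathbb{Z}^\infty$ (to which $o_P,O_P$ refer); $ca(\mathbb{Z})$ signed Borel measures of finite variation; $\mathcal{D}$ discretely supported probability measures; $P_n$ the empirical distribution. $\mathcal{M}$ a set of Borel probability measures, $\psi:\mathcal{M}\to\Theta$, $(\Theta,\|\cdot\|_\Theta)$ a normed space, $\mathbb{K}\subseteq\mathbb{R}_+$ unbounded above. A regularization is a family $(\psi_k)_{k\in\mathbb{K}}$, $\psi_k:\mathbb{D}_\psi\subseteq ca(\mathbb{Z})\to\Theta$, $\mathbb{D}_\psi\supseteq\mathcal{M}\cup\mathcal{D}$, with $\|\psi_k(Q)-\psi(Q)\|_\Theta\to0$ for all $Q\in\mathcal{M}$. A modulus of continuity is a continuous non-decreasing $f:\mathbb{R}_+\to\mathbb{R}_+$ with $f(t)=0$ iff $t=0$; the regularization is continuous at $P$ w.r.t. a distance $d$ if there are moduli $(\delta_k)$ with $\|\psi_k(P')-\psi_k(P)\|_\Theta\le\delta_k(d(P',P))$ for all $k$ and $P'\in\mathbb{D}_\psi$. Assume this, and that $(r_n)$ is a positive diverging sequence with $d(P_n,P)=o_P(r_n^{-1})$. $k\mapsto\bar B_k(P)$ is non-increasing $\mathbb{R}_+\to\mathbb{R}_+$ with $\bar B_k(P)\ge\|\psi_k(P)-\psi(P)\|_\Theta$ and $\bar B_k(P)\to0$; for each $n$, $k\mapsto\bar\delta_k(r_n^{-1})$ is non-decreasing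 $\mathbb{R}_+\to\mathbb{R}_+$ with $\bar\delta_k(r_n^{-1})\ge\delta_k(r_n^{-1})$. $\mathcal{G}_n$ is a finite subset of $\mathbb{K}$, $\mathcal{L}_n=\{k\in\mathcal{G}_n:\|\psi_k(P_n)-\psi_{k'}(P_n)\|_\Theta\le4\bar\delta_{k'}(r_n^{-1})\ \forall k'\ge k,\ k'\in\mathcal{G}_n\}$, and $\tilde k_n=\min\mathcal{L}_n$. *)

theory Defs
  imports "HOL-Probability.Probability" "HOL-Library.Landau_Symbols"
begin

definition borelZ :: "'a::topological_space set \<Rightarrow> 'a set set" where
  "borelZ Z = sets (restrict_space borel Z)"

definition real_countably_additive :: "'a set set \<Rightarrow> ('a set \<Rightarrow> real) \<Rightarrow> bool" where
  "real_countably_additive S \<mu> \<longleftrightarrow>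
     (\<forall>A. range A \<subseteq> S \<longrightarrow> disjoint_family A \<longrightarrow> (\<Union>i. A i) \<in> S \<longrightarrow>
          (\<lambda>i. \<mu> (A i)) sums \<mu> (\<Union>i. A i))"

definition finite_variation :: "'a set set \<Rightarrow> ('a set \<Rightarrow> real) \<Rightarrow> bool" where
  "finite_variation S \<mu> \<longleftrightarrow>
     (\<exists>V. \<forall>(A::nat \<Rightarrow> 'a set) n. (\<forall>i<n. A i \<in> S) \<and> disjoint_family_on A {..<n} \<longrightarrow>
          (\<Sum>i<n. \<bar>\<mu> (A i)\<bar>) \<le> V)"

text \<open>ca(Z): signed Borel measures of finite variation on Z (set functions vanishing
  on non-Borel sets, so that the representation is canonical).\<close>
definition ca :: "'a::topological_space set \<Rightarrow> ('a set \<Rightarrow> real) set" where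
  "ca Z = {\<mu>. (\<forall>A. A \<notin> borelZ Z \<longrightarrow> \<mu> A = 0) \<and>
              real_countably_additive (borelZ Z) \<mu> \<and> finite_variation (borelZ Z) \<mu>}"

definition measure_to_ca :: "'a measure \<Rightarrow> ('a set \<Rightarrow> real)" where
  "measure_to_ca Q = (\<lambda>A. if A \<in> sets Q then measure Q A else 0)"

definition discrete_probs :: "'a::topological_space set \<Rightarrow> ('a set \<Rightarrow> real) set" where
  "discrete_probs Z = {\<mu> \<in> ca Z. (\<forall>A\<in>borelZ Z. 0 \<le> \<mu> A) \<and> \<mu> Z = 1 \<and>
                         (\<exists>S. countable S \<and> S \<subseteq> Z \<and> \<mu> S = 1)}"

definition empirical :: "'a::topological_space set \<Rightarrow> (nat \<Rightarrow> 'a) \<Rightarrow> nat \<Rightarrow> ('a set \<Rightarrow> real)" where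
  "empirical Z \<omega> n = (\<lambda>A. if A \<in> borelZ Z then (\<Sum>i<n. indicator A (\<omega> i)) / real n else 0)"

definition outer_prob :: "'w measure \<Rightarrow> 'w set \<Rightarrow> real" where
  "outer_prob M A = (INF B \<in> {B \<in> sets M. A \<subseteq> B}. measure M B)"

definition little_oP :: "'w measure \<Rightarrow> (nat \<Rightarrow> 'w \<Rightarrow> real) \<Rightarrow> (nat \<Rightarrow> real) \<Rightarrow> bool" where
  "little_oP M Y a \<longleftrightarrow> (\<forall>\<eta>>0. \<forall>\<epsilon>>0. \<exists>N. \<forall>n\<ge>N.
       outer_prob M {\<omega> \<in> space M. \<bar>Y n \<omega>\<bar> > \<eta> * a n} < \<epsilon>)"

definition big_OP :: "'w measure \<Rightarrow> (nat \<Rightarrow> 'w \<Rightarrow> real) \<Rightarrow> (nat \<Rightarrow> real) \<Rightarrow> bool" where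
  "big_OP M Y a \<longleftrightarrow> (\<forall>\<epsilon>>0. \<exists>C. \<exists>N. \<forall>n\<ge>N.
       outer_prob M {\<omega> \<in> space M. \<bar>Y n \<omega>\<bar> > C * a n} < \<epsilon>)"

definition modulus :: "(real \<Rightarrow> real) \<Rightarrow> bool" where
  "modulus f \<longleftrightarrow> continuous_on {0..} f \<and> mono_on {0..} f \<and> (\<forall>t\<ge>0. 0 \<le> f t) \<and>
                 (\<forall>t\<ge>0. f t = 0 \<longleftrightarrow> t = 0)"

definition regularization ::
  "'a::topological_space set \<Rightarrow> 'a measure set \<Rightarrow> ('a measure \<Rightarrow> 'th::real_normed_vector) \<Rightarrow> real set
     \<Rightarrow> ('a set \<Rightarrow> real) set \<Rightarrow> (real \<Rightarrow> ('a set \<Rightarrow> real) \<Rightarrow> 'th) \<Rightarrow> bool" where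
  "regularization Z \<M> \<psi> K D\<psi> \<psi>k \<longleftrightarrow>
     D\<psi> \<subseteq> ca Z \<and> measure_to_ca ` \<M> \<subseteq> D\<psi> \<and> discrete_probs Z \<subseteq> D\<psi> \<and>
     (\<forall>Q\<in>\<M>. ((\<lambda>k. \<psi>k k (measure_to_ca Q)) \<longlongrightarrow> \<psi> Q) (at_top \<sqinter> principal K))"

definition reg_continuous_at ::
  "('a set \<Rightarrow> real) set \<Rightarrow> real set \<Rightarrow> (real \<Rightarrow> ('a set \<Rightarrow> real) \<Rightarrow> 'th::real_normed_vector)
     \<Rightarrow> (('a set \<Rightarrow> real) \<Rightarrow> ('a set \<Rightarrow> real) \<Rightarrow> real) \<Rightarrow> (real \<Rightarrow> real \<Rightarrow> real) \<Rightarrow> ('a set \<Rightarrow> real) \<Rightarrow> bool" where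
  "reg_continuous_at D\<psi> K \<psi>k d \<delta> \<mu> \<longleftrightarrow>
     (\<forall>k\<in>K. modulus (\<delta> k)) \<and>
     (\<forall>k\<in>K. \<forall>\<mu>'\<in>D\<psi>. norm (\<psi>k k \<mu>' - \<psi>k k \<mu>) \<le> \<delta> k (d \<mu>' \<mu>))"

definition Lset ::
  "'a::topological_space set \<Rightarrow> (real \<Rightarrow> ('a set \<Rightarrow> real) \<Rightarrow> 'th::real_normed_vector) \<Rightarrow> (real \<Rightarrow> real \<Rightarrow> real)
     \<Rightarrow> (nat \<Rightarrow> real) \<Rightarrow> (nat \<Rightarrow> real set) \<Rightarrow> nat \<Rightarrow> (nat \<Rightarrow> 'a) \<Rightarrow> real set" where
  "Lset Z \<psi>k \<delta>b r G n \<omega> =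
     {k \<in> G n. \<forall>k'\<in>G n. k \<le> k' \<longrightarrow>
        norm (\<psi>k k (empirical Z \<omega> n) - \<psi>k k' (empirical Z \<omega> n)) \<le> 4 * \<delta>b k' (1 / r n)}"

definition ktilde ::
  "'a::topological_space set \<Rightarrow> (real \<Rightarrow> ('a set \<Rightarrow> real) \<Rightarrow> 'th::real_normed_vector) \<Rightarrow> (real \<Rightarrow> real \<Rightarrow> real)
     \<Rightarrow> (nat \<Rightarrow> real) \<Rightarrow> (nat \<Rightarrow> real set) \<Rightarrow> nat \<Rightarrow> (nat \<Rightarrow> 'a) \<Rightarrow> real" where
  "ktilde Z \<psi>k \<delta>b r G n \<omega> = Min (Lset Z \<psi>k \<delta>b r G n \<omega>)"

end

theory Submission
  imports Defs
begin

text \<open>On the event d(P_n, P) \<le> 1/r_n every regularized estimate satisfies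
  \<parallel>\<psi>_k(P_n) - \<psi>(P)\<parallel> \<le> \<delta>b_k + Bb_k. Any grid point k where the variance majorant \<delta>b
  dominates the bias majorant Bb then belongs to the Lepski set, so the smallest element of
  that set costs at most 6 \<delta>b_k. Choosing the best such k, the ratio condition compares
  \<delta>b_k with the largest \<delta>b_k' at a grid point where the bias dominates, and monotonicity
  shows that such a \<delta>b_k' is below \<delta>b_j + Bb_j for every j \<ge> 0.\<close>

definition lepski_set :: "real set \<Rightarrow> (real \<Rightarrow> 'th::real_normed_vector) \<Rightarrow> (real \<Rightarrow> real) \<Rightarrow> real set" where
  "lepski_set G \<theta> \<delta> = {k \<in> G. \<forall>k'\<in>G. k \<le> k' \<longrightarrow> norm (\<theta> k - \<theta> k') \<le> 4 * \<delta> k'}"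

lemma Lset_eq_lepski_set:
  "Lset Z \<psi>k \<delta>b r G n \<omega> = lepski_set (G n) (\<lambda>k. \<psi>k k (empirical Z \<omega> n)) (\<lambda>k. \<delta>b k (1 / r n))"
  by (simp add: Lset_def lepski_set_def)

lemma in_lepski_set:
  assumes k: "k \<in> G" "B k \<le> \<delta> k"
    and err: "\<And>k. k \<in> G \<Longrightarrow> norm (\<theta> k - \<theta>0) \<le> \<delta> k + B k"
    and \<delta>_mono: "mono_on G \<delta>" and B_antimono: "antimono_on G B"
  shows "k \<in> lepski_set G \<theta> \<delta>"
  unfolding lepski_set_def
proof (intro CollectI conjI ballI impI \<open>k \<in> G\<close>)
  fix k' assume k': "k' \<in> G" "k \<le> k'"
  have "B k' \<le> B k" using B_antimono k k' by (auto simp: monotone_on_def)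
  moreover have "\<delta> k \<le> \<delta> k'" using \<delta>_mono k k' by (auto simp: monotone_on_def)
  moreover have "norm (\<theta> k - \<theta> k') \<le> (\<delta> k + B k) + (\<delta> k' + B k')"
    using err[OF k(1)] err[OF k'(1)] by (metis norm_diff_triangle_le norm_minus_commute)
  ultimately show "norm (\<theta> k - \<theta> k') \<le> 4 * \<delta> k'" using k(2) by linarith
qed

lemma lepski_oracle_inequality:
  assumes "finite G" and k: "k \<in> G" "B k \<le> \<delta> k"
    and err: "\<And>k. k \<in> G \<Longrightarrow> norm (\<theta> k - \<theta>0) \<le> \<delta> k + B k"
    and "mono_on G \<delta>" "antimono_on G B"
  shows "norm (\<theta> (Min (lepski_set G \<theta> \<delta>)) - \<theta>0) \<le> 6 * \<delta> k"
proof -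
  let ?L = "lepski_set G \<theta> \<delta>"
  have kL: "k \<in> ?L" using in_lepski_set assms by blast
  have "finite ?L" using \<open>finite G\<close> by (rule finite_subset[rotated]) (auto simp: lepski_set_def)
  then have "Min ?L \<in> ?L" "Min ?L \<le> k" using kL by (auto intro: Min_in)
  then have "norm (\<theta> (Min ?L) - \<theta> k) \<le> 4 * \<delta> k" using k by (auto simp: lepski_set_def)
  then have "norm (\<theta> (Min ?L) - \<theta>0) \<le> 4 * \<delta> k + (\<delta> k + B k)"
    using err[OF k(1)] by (rule norm_diff_triangle_le)
  with k(2) show ?thesis by linarith
qed

lemma below_bias_le_INF_sum:
  fixes \<delta> B :: "real \<Rightarrow> real"
  assumes \<delta>_mono: "mono_on {0..} \<delta>" and B_antimono: "antimono_on {0..} B"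
    and nonneg: "\<And>k. 0 \<le> k \<Longrightarrow> 0 \<le> \<delta> k" "\<And>k. 0 \<le> k \<Longrightarrow> 0 \<le> B k"
    and k0: "0 \<le> k0" "\<delta> k0 \<le> B k0"
  shows "\<delta> k0 \<le> (INF k\<in>{0..}. \<delta> k + B k)"
proof (rule cINF_greatest)
  fix k :: real assume "k \<in> {0..}"
  then have "0 \<le> k" by simp
  show "\<delta> k0 \<le> \<delta> k + B k"
  proof (cases "k0 \<le> k")
    case True
    then have "\<delta> k0 \<le> \<delta> k" using \<delta>_mono k0 \<open>0 \<le> k\<close> by (auto simp: monotone_on_def)
    with nonneg(2)[OF \<open>0 \<le> k\<close>] show ?thesis by linarith
  next
    case False
    then have "B k0 \<le> B k" using B_antimono k0 \<open>0 \<le> k\<close> by (auto simp: monotone_on_def)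
    with nonneg(1)[OF \<open>0 \<le> k\<close>] k0 show ?thesis by linarith
  qed
qed simp

lemma lepski_rate_bound:
  fixes \<theta> :: "real \<Rightarrow> 'th::real_normed_vector" and \<delta> B :: "real \<Rightarrow> real"
  assumes G: "finite G" "G \<subseteq> {0..}"
    and \<delta>_mono: "mono_on {0..} \<delta>" and B_antimono: "antimono_on {0..} B"
    and nonneg: "\<And>k. 0 \<le> k \<Longrightarrow> 0 \<le> \<delta> k" "\<And>k. 0 \<le> k \<Longrightarrow> 0 \<le> B k"
    and \<delta>_pos: "\<And>k. k \<in> G \<Longrightarrow> 0 < \<delta> k" \<comment> \<open>otherwise the ratio below could be a junk x / 0 = 0\<close>
    and err: "\<And>k. k \<in> G \<Longrightarrow> norm (\<theta> k - \<theta>0) \<le> \<delta> k + B k"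
    and above: "{k \<in> G. B k \<le> \<delta> k} \<noteq> {}" and below: "{k \<in> G. \<delta> k \<le> B k} \<noteq> {}"
    and ratio: "Min (\<delta> ` {k \<in> G. B k \<le> \<delta> k}) / Max (\<delta> ` {k \<in> G. \<delta> k \<le> B k}) \<le> c"
  shows "norm (\<theta> (Min (lepski_set G \<theta> \<delta>)) - \<theta>0) \<le> 6 * c * (INF k\<in>{0..}. \<delta> k + B k)"
proof -
  have "Min (\<delta> ` {k \<in> G. B k \<le> \<delta> k}) \<in> \<delta> ` {k \<in> G. B k \<le> \<delta> k}"
    using above G(1) by (intro Min_in) auto
  then obtain k1 where k1: "k1 \<in> G" "B k1 \<le> \<delta> k1" "\<delta> k1 = Min (\<delta> ` {k \<in> G. B k \<le> \<delta> k})"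
    by auto
  have "Max (\<delta> ` {k \<in> G. \<delta> k \<le> B k}) \<in> \<delta> ` {k \<in> G. \<delta> k \<le> B k}"
    using below G(1) by (intro Max_in) auto
  then obtain k2 where k2: "k2 \<in> G" "\<delta> k2 \<le> B k2" "\<delta> k2 = Max (\<delta> ` {k \<in> G. \<delta> k \<le> B k})"
    by auto
  have "mono_on G \<delta>" "antimono_on G B"
    using G(2) \<delta>_mono B_antimono by (auto intro: monotone_on_subset)
  then have choice_bound: "norm (\<theta> (Min (lepski_set G \<theta> \<delta>)) - \<theta>0) \<le> 6 * \<delta> k1"
    using lepski_oracle_inequality G(1) k1(1,2) err by blast
  have "\<delta> k1 \<le> c * \<delta> k2"
    using ratio k1(3) k2(3) \<delta>_pos[OF k2(1)] by (simp add: divide_le_eq)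
  moreover have "0 \<le> c"
  proof -
    have "0 < c * \<delta> k2" using \<open>\<delta> k1 \<le> c * \<delta> k2\<close> \<delta>_pos[OF k1(1)] by linarith
    with \<delta>_pos[OF k2(1)] show ?thesis by (simp add: zero_less_mult_iff)
  qed
  moreover have "\<delta> k2 \<le> (INF k\<in>{0..}. \<delta> k + B k)"
    using k2(1,2) G(2) by (intro below_bias_le_INF_sum[OF \<delta>_mono B_antimono nonneg]) auto
  ultimately have "\<delta> k1 \<le> c * (INF k\<in>{0..}. \<delta> k + B k)"
    by (meson mult_left_mono order_trans)
  with choice_bound show ?thesis by simp
qed

lemma outer_prob_mono:
  assumes "A \<subseteq> B" "B \<subseteq> space M"
  shows "outer_prob M A \<le> outer_prob M B"
  unfolding outer_prob_def
  by (rule cINF_superset_mono) (use assms in \<open>auto intro: bdd_belowI[of _ 0]\<close>)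

lemma big_OP_if_bounded_off_little_oP_event:
  assumes small: "little_oP M Y a"
    and bound: "\<forall>\<^sub>F n in sequentially. \<forall>\<omega>\<in>space M. \<bar>Y n \<omega>\<bar> \<le> a n \<longrightarrow> \<bar>X n \<omega>\<bar> \<le> C * b n"
  shows "big_OP M X b"
  unfolding big_OP_def
proof (intro allI impI)
  fix \<epsilon> :: real assume "0 < \<epsilon>"
  then obtain N1 where N1: "\<And>n. n \<ge> N1 \<Longrightarrow> outer_prob M {\<omega> \<in> space M. \<bar>Y n \<omega>\<bar> > 1 * a n} < \<epsilon>"
    using small unfolding little_oP_def by (meson zero_less_one)
  obtain N2 where N2: "\<And>n \<omega>. n \<ge> N2 \<Longrightarrow> \<omega> \<in> space M \<Longrightarrow> \<bar>Y n \<omega>\<bar> \<le> a n \<Longrightarrow> \<bar>X n \<omega>\<bar> \<le> C * b n"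
    using bound unfolding eventually_sequentially by blast
  have "outer_prob M {\<omega> \<in> space M. \<bar>X n \<omega>\<bar> > C * b n} < \<epsilon>" if "n \<ge> max N1 N2" for n
  proof -
    have "{\<omega> \<in> space M. \<bar>X n \<omega>\<bar> > C * b n} \<subseteq> {\<omega> \<in> space M. \<bar>Y n \<omega>\<bar> > 1 * a n}"
      using N2 that by force
    then have "outer_prob M {\<omega> \<in> space M. \<bar>X n \<omega>\<bar> > C * b n}
        \<le> outer_prob M {\<omega> \<in> space M. \<bar>Y n \<omega>\<bar> > 1 * a n}"
      by (rule outer_prob_mono) auto
    also have "\<dots> < \<epsilon>" using N1 that by simp
    finally show ?thesis .
  qed
  then show "\<exists>C N. \<forall>n\<ge>N. outer_prob M {\<omega> \<in> space M. \<bar>X n \<omega>\<bar> > C * b n} < \<epsilon>"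
    by blast
qed

lemma eventually_le_if_bigo_one:
  fixes f :: "'a \<Rightarrow> real"
  assumes "f \<in> O[F](\<lambda>_. 1)"
  shows "\<exists>c. \<forall>\<^sub>F x in F. f x \<le> c"
proof -
  obtain c where "\<forall>\<^sub>F x in F. norm (f x) \<le> c * norm (1::real)"
    using assms by (elim landau_o.bigE) blast
  then have "\<forall>\<^sub>F x in F. f x \<le> c" by (rule eventually_mono) auto
  then show ?thesis ..
qed

lemma finite_in_borelZ:
  fixes Z :: "'a::t1_space set"
  assumes "finite S" "S \<subseteq> Z"
  shows "S \<in> borelZ Z"
proof -
  have "S \<in> sets borel" using assms(1) by (intro borel_closed finite_imp_closed)
  with assms(2) show ?thesis unfolding borelZ_def sets_restrict_space by blast
qed

lemma empirical_countably_additive: "real_countably_additive (borelZ Z) (empirical Z \<omega> n)"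
  unfolding real_countably_additive_def
proof (intro allI impI)
  fix A :: "nat \<Rightarrow> _ set"
  assume A: "range A \<subseteq> borelZ Z" "disjoint_family A" "(\<Union>i. A i) \<in> borelZ Z"
  have "(\<lambda>i. \<Sum>j<n. indicator (A i) (\<omega> j)::real) sums (\<Sum>j<n. indicator (\<Union>i. A i) (\<omega> j))"
    using A(2) by (intro sums_sum indicator_sums) (auto simp: disjoint_family_on_def)
  then have "(\<lambda>i. (\<Sum>j<n. indicator (A i) (\<omega> j)::real) / real n)
      sums ((\<Sum>j<n. indicator (\<Union>i. A i) (\<omega> j)) / real n)"
    by (rule sums_divide)
  with A(1,3) show "(\<lambda>i. empirical Z \<omega> n (A i)) sums empirical Z \<omega> n (\<Union>i. A i)"
    unfolding empirical_def by (simp add: range_subsetD)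
qed

lemma empirical_finite_variation: "finite_variation (borelZ Z) (empirical Z \<omega> n)"
  unfolding finite_variation_def
proof (intro exI allI impI)
  fix A :: "nat \<Rightarrow> _ set" and m
  assume A: "(\<forall>i<m. A i \<in> borelZ Z) \<and> disjoint_family_on A {..<m}"
  have "(\<Sum>i<m. \<bar>empirical Z \<omega> n (A i)\<bar>) = (\<Sum>i<m. (\<Sum>j<n. indicator (A i) (\<omega> j)::real) / real n)"
    using A by (intro sum.cong) (auto simp: empirical_def abs_of_nonneg sum_nonneg)
  also have "\<dots> = (\<Sum>j<n. indicator (\<Union>(A ` {..<m})) (\<omega> j)::real) / real n"
    using A by (simp add: sum_divide_distrib[symmetric] sum.swap[of _ "{..<m}"] indicator_UN_disjoint)
  also have "\<dots> \<le> (\<Sum>j<n. 1::real) / real n"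
    by (intro divide_right_mono sum_mono) (auto simp: indicator_def)
  also have "\<dots> \<le> 1" by simp
  finally show "(\<Sum>i<m. \<bar>empirical Z \<omega> n (A i)\<bar>) \<le> 1" .
qed

lemma empirical_in_discrete_probs:
  fixes Z :: "'a::t1_space set"
  assumes \<omega>: "\<And>i. \<omega> i \<in> Z" and "n \<ge> 1"
  shows "empirical Z \<omega> n \<in> discrete_probs Z"
proof -
  have support: "\<omega> ` {..<n} \<in> borelZ Z" using \<omega> by (intro finite_in_borelZ) auto
  have "Z \<in> borelZ Z" unfolding borelZ_def sets_restrict_space by auto
  then show ?thesis
    unfolding discrete_probs_def ca_def
    using empirical_countably_additive empirical_finite_variation support \<omega> \<open>n \<ge> 1\<close>
    by (auto simp: empirical_def intro!: exI[of _ "\<omega> ` {..<n}"] sum_nonneg divide_nonneg_nonneg)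
qed

lemma reg_continuous_at_pos:
  assumes "reg_continuous_at D\<psi> K \<psi>k d \<delta> \<mu>" "k \<in> K" "0 < t"
  shows "0 < \<delta> k t"
proof -
  have "modulus (\<delta> k)" using assms(1,2) by (simp add: reg_continuous_at_def)
  with assms(3) show ?thesis unfolding modulus_def by (metis less_eq_real_def)
qed

lemma reg_continuous_at_error_le:
  assumes "reg_continuous_at D\<psi> K \<psi>k d \<delta> \<mu>" "k \<in> K" "\<mu>' \<in> D\<psi>" "0 \<le> d \<mu>' \<mu>" "d \<mu>' \<mu> \<le> t"
    and bias: "norm (\<psi>k k \<mu> - \<theta>) \<le> B"
  shows "norm (\<psi>k k \<mu>' - \<theta>) \<le> \<delta> k t + B"
proof -
  have "mono_on {0..} (\<delta> k)" using assms(1,2) by (simp add: reg_continuous_at_def modulus_def)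
  then have "\<delta> k (d \<mu>' \<mu>) \<le> \<delta> k t" using assms(4,5) by (simp add: monotone_on_def)
  with assms(1-3) have "norm (\<psi>k k \<mu>' - \<psi>k k \<mu>) \<le> \<delta> k t"
    unfolding reg_continuous_at_def by fastforce
  with bias show ?thesis by (blast intro: norm_diff_triangle_le)
qed

lemma lepski_regularized_bound:
  fixes \<delta>b B :: "real \<Rightarrow> real"
  assumes cont: "reg_continuous_at D\<psi> K \<psi>k d \<delta> \<mu>"
    and \<mu>': "\<mu>' \<in> D\<psi>" "0 \<le> d \<mu>' \<mu>" "d \<mu>' \<mu> \<le> t" and "0 < t"
    and G: "finite G" "G \<subseteq> K" and K: "K \<subseteq> {0..}"
    and \<delta>_le: "\<And>k. k \<in> K \<Longrightarrow> \<delta> k t \<le> \<delta>b k"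
    and bias: "\<And>k. k \<in> K \<Longrightarrow> norm (\<psi>k k \<mu> - \<theta>) \<le> B k"
    and mono: "mono_on {0..} \<delta>b" "antimono_on {0..} B"
    and nonneg: "\<And>k. 0 \<le> k \<Longrightarrow> 0 \<le> \<delta>b k" "\<And>k. 0 \<le> k \<Longrightarrow> 0 \<le> B k"
    and above: "{k \<in> G. B k \<le> \<delta>b k} \<noteq> {}" and below: "{k \<in> G. \<delta>b k \<le> B k} \<noteq> {}"
    and ratio: "Min (\<delta>b ` {k \<in> G. B k \<le> \<delta>b k}) / Max (\<delta>b ` {k \<in> G. \<delta>b k \<le> B k}) \<le> c"
  shows "norm (\<psi>k (Min (lepski_set G (\<lambda>k. \<psi>k k \<mu>') \<delta>b)) \<mu>' - \<theta>)
    \<le> 6 * c * (INF k\<in>{0..}. \<delta>b k + B k)"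
proof (rule lepski_rate_bound[OF G(1) _ mono nonneg _ _ above below ratio])
  show "G \<subseteq> {0..}" using G(2) K by blast
next
  fix k assume "k \<in> G"
  then have "k \<in> K" using G(2) by blast
  show "0 < \<delta>b k"
    using reg_continuous_at_pos[OF cont \<open>k \<in> K\<close> \<open>0 < t\<close>] \<delta>_le[OF \<open>k \<in> K\<close>] by linarith
next
  fix k assume "k \<in> G"
  then have "k \<in> K" using G(2) by blast
  show "norm (\<psi>k k \<mu>' - \<theta>) \<le> \<delta>b k + B k"
    using reg_continuous_at_error_le[OF cont \<open>k \<in> K\<close> \<mu>' bias[OF \<open>k \<in> K\<close>]] \<delta>_le[OF \<open>k \<in> K\<close>]
    by linarith
qed

theorem proposition2:
  fixes Z :: "'a::euclidean_space set"
    and P :: "'a measure"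
    and \<M> :: "'a measure set"
    and \<psi> :: "'a measure \<Rightarrow> 'th::real_normed_vector"
    and \<psi>k :: "real \<Rightarrow> ('a set \<Rightarrow> real) \<Rightarrow> 'th"
    and D\<psi> :: "('a set \<Rightarrow> real) set"
    and K :: "real set"
    and d :: "('a set \<Rightarrow> real) \<Rightarrow> ('a set \<Rightarrow> real) \<Rightarrow> real"
    and \<delta> :: "real \<Rightarrow> real \<Rightarrow> real"
    and r :: "nat \<Rightarrow> real"
    and Bb :: "real \<Rightarrow> real"
    and \<delta>b :: "real \<Rightarrow> real \<Rightarrow> real"
    and G :: "nat \<Rightarrow> real set"
  assumes model: "\<forall>Q\<in>\<M>. prob_space Q \<and> space Q = Z \<and> sets Q = borelZ Z"
    and P_in: "P \<in> \<M>"
    and K_pos: "K \<subseteq> {0..}"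
    and K_unbounded: "\<forall>x. \<exists>k\<in>K. x < k"
    and reg: "regularization Z \<M> \<psi> K D\<psi> \<psi>k"
    and d_nonneg: "\<forall>\<mu>\<in>D\<psi>. \<forall>\<mu>'\<in>D\<psi>. 0 \<le> d \<mu> \<mu>'"
    and cont: "reg_continuous_at D\<psi> K \<psi>k d \<delta> (measure_to_ca P)"
    and r_pos: "\<forall>n. 0 < r n"
    and r_div: "filterlim r at_top sequentially"
    and rate: "little_oP (PiM UNIV (\<lambda>_::nat. P))
                 (\<lambda>n \<omega>. d (empirical Z \<omega> n) (measure_to_ca P)) (\<lambda>n. 1 / r n)"
    and Bb_antimono: "antimono_on {0..} Bb"
    and Bb_nonneg: "\<forall>k\<ge>0. 0 \<le> Bb k"
    and Bb_bias: "\<forall>k\<in>K. norm (\<psi>k k (measure_to_ca P) - \<psi> P) \<le> Bb k"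
    and Bb_lim: "(Bb \<longlongrightarrow> 0) at_top"
    and \<delta>b_mono: "\<forall>n. mono_on {0..} (\<lambda>k. \<delta>b k (1 / r n))"
    and \<delta>b_nonneg: "\<forall>n. \<forall>k\<ge>0. 0 \<le> \<delta>b k (1 / r n)"
    and \<delta>b_ge: "\<forall>n. \<forall>k\<in>K. \<delta> k (1 / r n) \<le> \<delta>b k (1 / r n)"
    and G_fin: "\<forall>n. finite (G n)"
    and G_sub: "\<forall>n. G n \<subseteq> K"
    and \<delta>b_cont: "\<forall>t\<ge>0. continuous_on {0..} (\<lambda>k. \<delta>b k t)"
    and Bb_cont: "continuous_on {0..} Bb"
    and Gplus_ne: "\<forall>n. {k \<in> G n. Bb k \<le> \<delta>b k (1 / r n)} \<noteq> {}"
    and Gminus_ne: "\<forall>n. {k \<in> G n. \<delta>b k (1 / r n) \<le> Bb k} \<noteq> {}"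
    and ratio: "(\<lambda>n. Min ((\<lambda>k. \<delta>b k (1 / r n)) ` {k \<in> G n. Bb k \<le> \<delta>b k (1 / r n)})
                    / Max ((\<lambda>k. \<delta>b k (1 / r n)) ` {k \<in> G n. \<delta>b k (1 / r n) \<le> Bb k}))
                \<in> O(\<lambda>_. 1)"
  shows "big_OP (PiM UNIV (\<lambda>_::nat. P))
           (\<lambda>n \<omega>. norm (\<psi>k (ktilde Z \<psi>k \<delta>b r G n \<omega>) (empirical Z \<omega> n) - \<psi> P))
           (\<lambda>n. INF k\<in>{0..}. \<delta>b k (1 / r n) + Bb k)"
proof -
  \<comment> \<open>The bound holds pointwise on the event d(P_n, P) \<le> 1/r_n, for every n.\<close>
  let ?M = "PiM UNIV (\<lambda>_::nat. P)"
  let ?ratio = "\<lambda>n. Min ((\<lambda>k. \<delta>b k (1 / r n)) ` {k \<in> G n. Bb k \<le> \<delta>b k (1 / r n)})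
      / Max ((\<lambda>k. \<delta>b k (1 / r n)) ` {k \<in> G n. \<delta>b k (1 / r n) \<le> Bb k})"
  obtain c N where ratio_le: "\<And>n. n \<ge> N \<Longrightarrow> ?ratio n \<le> c"
    using eventually_le_if_bigo_one[OF ratio] unfolding eventually_sequentially by blast
  have P_in_D: "measure_to_ca P \<in> D\<psi>" using reg P_in unfolding regularization_def by blast
  have empirical_in_D: "empirical Z \<omega> n \<in> D\<psi>" if "\<omega> \<in> space ?M" "n \<ge> 1" for \<omega> n
  proof -
    have "\<forall>i. \<omega> i \<in> Z" using that(1) model P_in by (auto simp: space_PiM)
    with \<open>n \<ge> 1\<close> reg show ?thesis
      using empirical_in_discrete_probs unfolding regularization_def by blast
  qed
  have "\<forall>\<^sub>F n in sequentially. \<forall>\<omega>\<in>space ?M.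
      \<bar>d (empirical Z \<omega> n) (measure_to_ca P)\<bar> \<le> 1 / r n \<longrightarrow>
      \<bar>norm (\<psi>k (ktilde Z \<psi>k \<delta>b r G n \<omega>) (empirical Z \<omega> n) - \<psi> P)\<bar>
        \<le> 6 * c * (INF k\<in>{0..}. \<delta>b k (1 / r n) + Bb k)"
    unfolding eventually_sequentially
  proof (intro exI[of _ "max N 1"] allI impI ballI)
    fix n \<omega> assume n: "max N 1 \<le> n" and \<omega>: "\<omega> \<in> space ?M"
      and close: "\<bar>d (empirical Z \<omega> n) (measure_to_ca P)\<bar> \<le> 1 / r n"
    have "empirical Z \<omega> n \<in> D\<psi>" using empirical_in_D \<omega> n by simp
    then show "\<bar>norm (\<psi>k (ktilde Z \<psi>k \<delta>b r G n \<omega>) (empirical Z \<omega> n) - \<psi> P)\<bar>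
        \<le> 6 * c * (INF k\<in>{0..}. \<delta>b k (1 / r n) + Bb k)"
      unfolding ktilde_def Lset_eq_lepski_set abs_norm_cancel
      using close d_nonneg P_in_D r_pos G_fin G_sub K_pos \<delta>b_ge Bb_bias \<delta>b_mono Bb_antimono
        \<delta>b_nonneg Bb_nonneg Gplus_ne Gminus_ne ratio_le n
      by (intro lepski_regularized_bound[OF cont]) auto
  qed
  then show ?thesis by (rule big_OP_if_bounded_off_little_oP_event[OF rate])
qed

end
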